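(* Let $(A,* )$ be a finite-dimensional associative algebra, $(l,\rho,V)$ a finite-dimensional bimodule of $A$, and $T:V\to A$ an $\mathcal O$-operator associated to $(l,\rho,V)$. Let $T(V)\subset A$ carry the products $T(u)\succ T(v)=T(l(T(u))v)$, $T(u)\prec T(v)=T(\rho(T(v))u)$ ($u,v\in V$). Let $\mathcal D=T(V)\oplus V^*$ with products $$(x+a^* )\succ(y+b^* )=x\succ y+\rho^*(x)b^*,\qquad (x+a^* )\prec(y+b^* )=x\prec y+l^*(y)a^*$$ for $x,y\in T(V)$, $a^*,b^*\in V^*$. Then $\mathcal D$ is a dendriform algebra, and, with $\{v_1,\dots,v_m\}$ a basis of $V$ with dual basis $\{v_1^*,\dots,v_m^*\}$ and $T$ identified with $\sum_i T(v_i)\otimes v_i^*\in\mathcal D\otimes\mathcal D$, the element $r=T+\sigma(T)$ is a symmetric solution of the $D$-equation $r_{12}*r_{13}=r_{13}\prec r_{23}+r_{23}\succ r_{12}$ in $\mathcal D$ (where $*=\succ+\prec$ on $\mathcal D$).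
   Context: A bimodule of an associative algebra $(A,* )$ is a pair of linear maps $l,\rho:A\to\mathfrak{gl}(V)$ with $l(x*y)=l(x)l(y)$, $\rho(x*y)=\rho(y)\rho(x)$, $l(x)\rho(y)=\rho(y)l(x)$. For such maps, $l^*,\rho^*:A\to\mathfrak{gl}(V^* )$ are $\langle l^*(x)u^*,v\rangle=\langle u^*,l(x)v\rangle$, $\langle\rho^*(x)u^*,v\rangle=\langle u^*,\rho(x)v\rangle$ (here restricted to $T(V)$). An $\mathcal O$-operator associated to $(l,\rho,V)$ is a linear $T:V\to A$ with $T(u)*T(v)=T(l(T(u))v+\rho(T(v))u)$ for all $u,v\in V$. A dendriform algebra is a vector space with bilinear products $\prec,\succ$ such that, writing $x*y=x\prec y+x\succ y$: $(x\prec y)\prec z=x\prec(y*z)$, $(x\succ y)\prec z=x\succ(y\prec z)$, $x\succ(y\succ z)=(x*y)\succ z$. $\sigma(u\otimes v)=v\otimes u$. For $r=\sum_i x_i\otimes y_i$: $r_{12}*r_{13}=\sum_{i,j}x_i*x_j\otimes y_i\otimes y_j$, $r_{13}\prec r_{23}=\sum_{i,j}x_i\otimes x_j\otimes y_i\prec y_j$, $r_{23}\succ r_{12}=\sum_{i,j}x_j\otimes x_i\succ y_j\otimes y_i$. *)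

theory Defs
  imports Complex_Main "HOL-Library.Function_Algebras" "HOL-Library.Product_Plus"
begin

definition fd_vector_space :: "('k::field \<Rightarrow> 'b::ab_group_add \<Rightarrow> 'b) \<Rightarrow> bool" where
  "fd_vector_space s \<longleftrightarrow> vector_space s \<and> (\<exists>B. finite B \<and> module.span s B = UNIV)"

definition assoc_algebra :: "('k::field \<Rightarrow> 'a::ab_group_add \<Rightarrow> 'a) \<Rightarrow> ('a \<Rightarrow> 'a \<Rightarrow> 'a) \<Rightarrow> bool" where
  "assoc_algebra sA mult \<longleftrightarrow> vector_space sA \<and>
     (\<forall>x y z. mult (x + y) z = mult x z + mult y z) \<and>
     (\<forall>x y z. mult x (y + z) = mult x y + mult x z) \<and>
     (\<forall>c x y. mult (sA c x) y = sA c (mult x y)) \<and>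
     (\<forall>c x y. mult x (sA c y) = sA c (mult x y)) \<and>
     (\<forall>x y z. mult (mult x y) z = mult x (mult y z))"

definition linear_to_gl :: "('k::field \<Rightarrow> 'a::ab_group_add \<Rightarrow> 'a) \<Rightarrow> ('k \<Rightarrow> 'v::ab_group_add \<Rightarrow> 'v)
     \<Rightarrow> ('a \<Rightarrow> 'v \<Rightarrow> 'v) \<Rightarrow> bool" where
  "linear_to_gl sA sV l \<longleftrightarrow> (\<forall>x. Vector_Spaces.linear sV sV (l x)) \<and>
     (\<forall>x y v. l (x + y) v = l x v + l y v) \<and> (\<forall>c x v. l (sA c x) v = sV c (l x v))"

definition bimodule :: "('k::field \<Rightarrow> 'a::ab_group_add \<Rightarrow> 'a) \<Rightarrow> ('a \<Rightarrow> 'a \<Rightarrow> 'a)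
     \<Rightarrow> ('k \<Rightarrow> 'v::ab_group_add \<Rightarrow> 'v) \<Rightarrow> ('a \<Rightarrow> 'v \<Rightarrow> 'v) \<Rightarrow> ('a \<Rightarrow> 'v \<Rightarrow> 'v) \<Rightarrow> bool" where
  "bimodule sA mult sV l \<rho> \<longleftrightarrow> vector_space sV \<and> linear_to_gl sA sV l \<and> linear_to_gl sA sV \<rho> \<and>
     (\<forall>x y. l (mult x y) = l x \<circ> l y) \<and>
     (\<forall>x y. \<rho> (mult x y) = \<rho> y \<circ> \<rho> x) \<and>
     (\<forall>x y. l x \<circ> \<rho> y = \<rho> y \<circ> l x)"

definition O_operator :: "('k::field \<Rightarrow> 'a::ab_group_add \<Rightarrow> 'a) \<Rightarrow> ('a \<Rightarrow> 'a \<Rightarrow> 'a)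
     \<Rightarrow> ('k \<Rightarrow> 'v::ab_group_add \<Rightarrow> 'v) \<Rightarrow> ('a \<Rightarrow> 'v \<Rightarrow> 'v) \<Rightarrow> ('a \<Rightarrow> 'v \<Rightarrow> 'v) \<Rightarrow> ('v \<Rightarrow> 'a) \<Rightarrow> bool" where
  "O_operator sA mult sV l \<rho> T \<longleftrightarrow> Vector_Spaces.linear sV sA T \<and>
     (\<forall>u v. mult (T u) (T v) = T (l (T u) v + \<rho> (T v) u))"

definition dendriform_algebra :: "('k::field \<Rightarrow> 'd::ab_group_add \<Rightarrow> 'd) \<Rightarrow> 'd set
     \<Rightarrow> ('d \<Rightarrow> 'd \<Rightarrow> 'd) \<Rightarrow> ('d \<Rightarrow> 'd \<Rightarrow> 'd) \<Rightarrow> bool" where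
  "dendriform_algebra s S prec succ \<longleftrightarrow>
     0 \<in> S \<and> (\<forall>x\<in>S. \<forall>y\<in>S. x + y \<in> S) \<and> (\<forall>c. \<forall>x\<in>S. s c x \<in> S) \<and>
     (\<forall>x\<in>S. \<forall>y\<in>S. prec x y \<in> S \<and> succ x y \<in> S) \<and>
     (\<forall>x\<in>S. \<forall>y\<in>S. \<forall>z\<in>S.
        prec (x + y) z = prec x z + prec y z \<and> prec x (y + z) = prec x y + prec x z \<and>
        succ (x + y) z = succ x z + succ y z \<and> succ x (y + z) = succ x y + succ x z) \<and>
     (\<forall>c. \<forall>x\<in>S. \<forall>y\<in>S.
        prec (s c x) y = s c (prec x y) \<and> prec x (s c y) = s c (prec x y) \<and>
        succ (s c x) y = s c (succ x y) \<and> succ x (s c y) = s c (succ x y)) \<and>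
     (\<forall>x\<in>S. \<forall>y\<in>S. \<forall>z\<in>S.
        prec (prec x y) z = prec x (prec y z + succ y z) \<and>
        prec (succ x y) z = succ x (prec y z) \<and>
        succ x (succ y z) = succ (prec x y + succ x y) z)"

(* dendriform products on T(V): T(u) \<succ> T(v) = T(l(T u) v), T(u) \<prec> T(v) = T(\<rho>(T v) u) *)
definition TV_succ :: "('v \<Rightarrow> 'a) \<Rightarrow> ('a \<Rightarrow> 'v \<Rightarrow> 'v) \<Rightarrow> 'a \<Rightarrow> 'a \<Rightarrow> 'a" where
  "TV_succ T l x y = T (l x (SOME v. T v = y))"

definition TV_prec :: "('v \<Rightarrow> 'a) \<Rightarrow> ('a \<Rightarrow> 'v \<Rightarrow> 'v) \<Rightarrow> 'a \<Rightarrow> 'a \<Rightarrow> 'a" where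
  "TV_prec T \<rho> x y = T (\<rho> y (SOME u. T u = x))"

(* D = T(V) \<oplus> V^*, elements are pairs (x, a^st) with x \<in> T(V) and a^st a linear functional on V *)
definition D_carrier :: "('k::field \<Rightarrow> 'v::ab_group_add \<Rightarrow> 'v) \<Rightarrow> ('v \<Rightarrow> 'a) \<Rightarrow> ('a \<times> ('v \<Rightarrow> 'k)) set" where
  "D_carrier sV T = {(x, f). x \<in> range T \<and> Vector_Spaces.linear sV ((*)) f}"

definition D_scale :: "('k::field \<Rightarrow> 'a \<Rightarrow> 'a) \<Rightarrow> 'k \<Rightarrow> 'a \<times> ('v \<Rightarrow> 'k) \<Rightarrow> 'a \<times> ('v \<Rightarrow> 'k)" where
  "D_scale sA c p = (sA c (fst p), \<lambda>v. c * snd p v)"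

(* (x + a^st) \<succ> (y + b^st) = x \<succ> y + \<rho>*(x) b^st,  with \<langle>\<rho>*(x) b^st, v\<rangle> = \<langle>b^st, \<rho>(x) v\<rangle> *)
definition D_succ :: "('v \<Rightarrow> 'a) \<Rightarrow> ('a \<Rightarrow> 'v \<Rightarrow> 'v) \<Rightarrow> ('a \<Rightarrow> 'v \<Rightarrow> 'v)
     \<Rightarrow> 'a \<times> ('v \<Rightarrow> 'k) \<Rightarrow> 'a \<times> ('v \<Rightarrow> 'k) \<Rightarrow> 'a \<times> ('v \<Rightarrow> 'k)" where
  "D_succ T l \<rho> p q = (TV_succ T l (fst p) (fst q), \<lambda>v. snd q (\<rho> (fst p) v))"

(* (x + a^st) \<prec> (y + b^st) = x \<prec> y + l*(y) a^st,  with \<langle>l*(y) a^st, v\<rangle> = \<langle>a^st, l(y) v\<rangle> *)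
definition D_prec :: "('v \<Rightarrow> 'a) \<Rightarrow> ('a \<Rightarrow> 'v \<Rightarrow> 'v) \<Rightarrow> ('a \<Rightarrow> 'v \<Rightarrow> 'v)
     \<Rightarrow> 'a \<times> ('v \<Rightarrow> 'k) \<Rightarrow> 'a \<times> ('v \<Rightarrow> 'k) \<Rightarrow> 'a \<times> ('v \<Rightarrow> 'k)" where
  "D_prec T l \<rho> p q = (TV_prec T \<rho> (fst p) (fst q), \<lambda>v. snd p (l (fst q) v))"

definition lin_functional_on :: "('k::field \<Rightarrow> 'd::ab_group_add \<Rightarrow> 'd) \<Rightarrow> 'd set \<Rightarrow> ('d \<Rightarrow> 'k) \<Rightarrow> bool" where
  "lin_functional_on s S \<phi> \<longleftrightarrow> (\<forall>x\<in>S. \<forall>y\<in>S. \<phi> (x + y) = \<phi> x + \<phi> y) \<and> (\<forall>c. \<forall>x\<in>S. \<phi> (s c x) = c * \<phi> x)"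

(* Tensors in S \<otimes> S (resp. S \<otimes> S \<otimes> S) are given as finite lists of elementary tensors.
   Equality of tensors (S finite-dimensional) is tested by pairing with all triples of
   linear functionals on S. *)
definition tensor2_eq :: "('k::field \<Rightarrow> 'd::ab_group_add \<Rightarrow> 'd) \<Rightarrow> 'd set \<Rightarrow> ('d \<times> 'd) list \<Rightarrow> ('d \<times> 'd) list \<Rightarrow> bool" where
  "tensor2_eq s S r r' \<longleftrightarrow> (\<forall>\<phi>1 \<phi>2. lin_functional_on s S \<phi>1 \<longrightarrow> lin_functional_on s S \<phi>2 \<longrightarrow>
     (\<Sum>(x, y)\<leftarrow>r. \<phi>1 x * \<phi>2 y) = (\<Sum>(x, y)\<leftarrow>r'. \<phi>1 x * \<phi>2 y))"

definition tensor3_eq :: "('k::field \<Rightarrow> 'd::ab_group_add \<Rightarrow> 'd) \<Rightarrow> 'd set \<Rightarrow> ('d \<times> 'd \<times> 'd) list \<Rightarrow> ('d \<times> 'd \<times> 'd) list \<Rightarrow> bool" where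
  "tensor3_eq s S t t' \<longleftrightarrow> (\<forall>\<phi>1 \<phi>2 \<phi>3. lin_functional_on s S \<phi>1 \<longrightarrow> lin_functional_on s S \<phi>2 \<longrightarrow>
     lin_functional_on s S \<phi>3 \<longrightarrow>
     (\<Sum>(x, y, z)\<leftarrow>t. \<phi>1 x * \<phi>2 y * \<phi>3 z) = (\<Sum>(x, y, z)\<leftarrow>t'. \<phi>1 x * \<phi>2 y * \<phi>3 z))"

definition flip2 :: "('d \<times> 'd) list \<Rightarrow> ('d \<times> 'd) list" where
  "flip2 r = map (\<lambda>(x, y). (y, x)) r"

(* r = \<Sum>_i x_i \<otimes> y_i;  r12 * r13 = \<Sum>_{i,j} x_i * x_j \<otimes> y_i \<otimes> y_j *)
definition r12_r13 :: "('d \<Rightarrow> 'd \<Rightarrow> 'd) \<Rightarrow> ('d \<times> 'd) list \<Rightarrow> ('d \<times> 'd \<times> 'd) list" where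
  "r12_r13 m r = [(m xi xj, yi, yj). (xi, yi) \<leftarrow> r, (xj, yj) \<leftarrow> r]"

(* r13 \<prec> r23 = \<Sum>_{i,j} x_i \<otimes> x_j \<otimes> y_i \<prec> y_j *)
definition r13_r23 :: "('d \<Rightarrow> 'd \<Rightarrow> 'd) \<Rightarrow> ('d \<times> 'd) list \<Rightarrow> ('d \<times> 'd \<times> 'd) list" where
  "r13_r23 pr r = [(xi, xj, pr yi yj). (xi, yi) \<leftarrow> r, (xj, yj) \<leftarrow> r]"

(* r23 \<succ> r12 = \<Sum>_{i,j} x_j \<otimes> x_i \<succ> y_j \<otimes> y_i *)
definition r23_r12 :: "('d \<Rightarrow> 'd \<Rightarrow> 'd) \<Rightarrow> ('d \<times> 'd) list \<Rightarrow> ('d \<times> 'd \<times> 'd) list" where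
  "r23_r12 su r = [(xj, su xi yj, yi). (xi, yi) \<leftarrow> r, (xj, yj) \<leftarrow> r]"

definition D_equation :: "('k::field \<Rightarrow> 'd::ab_group_add \<Rightarrow> 'd) \<Rightarrow> 'd set
     \<Rightarrow> ('d \<Rightarrow> 'd \<Rightarrow> 'd) \<Rightarrow> ('d \<Rightarrow> 'd \<Rightarrow> 'd) \<Rightarrow> ('d \<times> 'd) list \<Rightarrow> bool" where
  "D_equation s S pr su r \<longleftrightarrow>
     tensor3_eq s S (r12_r13 (\<lambda>x y. pr x y + su x y) r) (r13_r23 pr r @ r23_r12 su r)"

end

theory Submission
  imports Defs
begin

text \<open>The products of \<open>T(V)\<close> are well defined because \<open>T (l (T u) w) = T u * T w - T (\<rho> (T w) u)\<close>
  vanishes for \<open>w \<in> ker T\<close>, and similarly for \<open>\<rho>\<close>. Writing elements of \<open>\<D>\<close> as \<open>(T u, f)\<close>, each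
  dendriform identity splits into a \<open>T(V)\<close>-part and a \<open>V\<^sup>*\<close>-part, both of which follow from the
  bimodule axioms once \<open>T u * T w\<close> is rewritten as \<open>T (l (T u) w + \<rho> (T w) u)\<close>.

  For the \<open>D\<close>-equation, pair both sides with three linear functionals on \<open>\<D>\<close>. Since
  \<open>V\<^sup>* \<prec> V\<^sup>* = V\<^sup>* \<succ> V\<^sup>* = T(V) \<prec> V\<^sup>* = V\<^sup>* \<succ> T(V) = 0\<close>, four families of terms survive
  on each side, and they match pairwise after moving \<open>l (T v\<^sub>i)\<close> or \<open>\<rho> (T v\<^sub>i)\<close> across the
  canonical element \<open>\<Sum>\<^sub>j v\<^sub>j \<otimes> v\<^sub>j\<^sup>*\<close>:
  \<open>\<Sum>\<^sub>j a (h v\<^sub>j) \<xi> (v\<^sub>j\<^sup>*) = \<xi> (a \<circ> h) = \<Sum>\<^sub>j a v\<^sub>j \<xi> (v\<^sub>j\<^sup>* \<circ> h)\<close>.\<close>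

lemma vector_space_field_mult: "vector_space ((*) :: 'k::field \<Rightarrow> 'k \<Rightarrow> 'k)"
  by unfold_locales (auto simp: algebra_simps)

abbreviation linear_functional :: "('k::field \<Rightarrow> 'v::ab_group_add \<Rightarrow> 'v) \<Rightarrow> ('v \<Rightarrow> 'k) \<Rightarrow> bool" where
  "linear_functional s g \<equiv> Vector_Spaces.linear s ((*)) g"

context vector_space
begin

lemma linear_functional_iff:
  "linear_functional scale g \<longleftrightarrow> (\<forall>x y. g (x + y) = g x + g y) \<and> (\<forall>c x. g (scale c x) = c * g x)"
  using vector_space_axioms vector_space_field_mult by (auto simp: Vector_Spaces.linear_iff)

lemma linear_functional_add:
    "linear_functional scale f \<Longrightarrow> linear_functional scale g \<Longrightarrow> linear_functional scale (f + g)"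
  and linear_functional_cmult: "linear_functional scale f \<Longrightarrow> linear_functional scale (\<lambda>z. c * f z)"
  and linear_functional_compose:
    "linear_functional scale f \<Longrightarrow> Vector_Spaces.linear scale scale h \<Longrightarrow> linear_functional scale (\<lambda>z. f (h z))"
  by (simp_all add: linear_functional_iff Vector_Spaces.linear_iff algebra_simps)

lemma linear_functional_sum_fun:
  "(\<And>i. i \<in> A \<Longrightarrow> linear_functional scale (f i)) \<Longrightarrow> linear_functional scale (\<lambda>z. \<Sum>i\<in>A. c i * f i z)"
  by (induction A rule: infinite_finite_induct)
    (simp_all add: linear_functional_iff sum.distrib algebra_simps flip: sum_distrib_left)

lemma linear_functional_sum:
  "linear_functional scale g \<Longrightarrow> g (\<Sum>i\<in>A. scale (c i) (w i)) = (\<Sum>i\<in>A. c i * g (w i))"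
  by (induction A rule: infinite_finite_induct) (auto simp: linear_functional_iff dest: spec[of _ 0])

end

locale dual_basis = vector_space sV for sV :: "'k::field \<Rightarrow> 'v::ab_group_add \<Rightarrow> 'v" +
  fixes m :: nat
    and v :: "nat \<Rightarrow> 'v"
    and vd :: "nat \<Rightarrow> 'v \<Rightarrow> 'k"
  assumes basis_inj: "inj_on v {..<m}"
    and basis_span: "span (v ` {..<m}) = UNIV"
    and dual_linear: "\<And>i. i < m \<Longrightarrow> linear_functional sV (vd i)"
    and dual_basis: "\<And>i j. i < m \<Longrightarrow> j < m \<Longrightarrow> vd i (v j) = (if i = j then 1 else 0)"
begin

lemma basis_expansion: "u = (\<Sum>i<m. sV (vd i u) (v i))"
proof -
  obtain c where "u = (\<Sum>w\<in>v ` {..<m}. sV (c w) w)"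
    using span_finite[of "v ` {..<m}"] basis_span by auto
  hence u: "u = (\<Sum>i<m. sV (c (v i)) (v i))"
    by (simp add: sum.reindex[OF basis_inj])
  have "vd j u = c (v j)" if "j < m" for j
  proof -
    have "vd j u = (\<Sum>i<m. c (v i) * vd j (v i))"
      using linear_functional_sum[OF dual_linear[OF that]] u by metis
    also have "\<dots> = c (v j)"
      using that by (simp add: dual_basis if_distrib sum.delta cong: if_cong)
    finally show ?thesis .
  qed
  with u show ?thesis by simp
qed

lemma linear_functional_expansion:
  "linear_functional sV g \<Longrightarrow> g u = (\<Sum>i<m. g (v i) * vd i u)"
  using linear_functional_sum[of g "\<lambda>i. vd i u" v "{..<m}"] basis_expansion[of u]
  by (metis (no_types, lifting) mult.commute sum.cong)

definition linear_on_dual :: "(('v \<Rightarrow> 'k) \<Rightarrow> 'k) \<Rightarrow> bool" where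
  "linear_on_dual \<xi> \<longleftrightarrow>
     (\<forall>f g. linear_functional sV f \<longrightarrow> linear_functional sV g \<longrightarrow> \<xi> (f + g) = \<xi> f + \<xi> g) \<and>
     (\<forall>c f. linear_functional sV f \<longrightarrow> \<xi> (\<lambda>z. c * f z) = c * \<xi> f)"

lemma linear_on_dual_add:
    "linear_on_dual \<xi> \<Longrightarrow> linear_functional sV f \<Longrightarrow> linear_functional sV g \<Longrightarrow> \<xi> (f + g) = \<xi> f + \<xi> g"
  and linear_on_dual_cmult:
    "linear_on_dual \<xi> \<Longrightarrow> linear_functional sV f \<Longrightarrow> \<xi> (\<lambda>z. c * f z) = c * \<xi> f"
  by (simp_all add: linear_on_dual_def)

lemma linear_on_dual_compose:
  assumes "linear_on_dual \<xi>" and "Vector_Spaces.linear sV sV h"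
  shows "linear_on_dual (\<lambda>f. \<xi> (\<lambda>z. f (h z)))"
  using assms linear_functional_compose[OF _ assms(2)]
  by (simp add: linear_on_dual_def plus_fun_def)

lemma linear_on_dual_sum:
  assumes \<xi>: "linear_on_dual \<xi>" and "finite A" and "\<And>i. i \<in> A \<Longrightarrow> linear_functional sV (f i)"
  shows "\<xi> (\<lambda>z. \<Sum>i\<in>A. c i * f i z) = (\<Sum>i\<in>A. c i * \<xi> (f i))"
  using assms(2,3)
proof (induction A rule: finite_induct)
  case empty
  have "linear_functional sV (\<lambda>z. 0)" by (simp add: linear_functional_iff)
  with linear_on_dual_cmult[OF \<xi> this, of 0] show ?case by simp
next
  case (insert j A)
  have "(\<lambda>z. \<Sum>i\<in>insert j A. c i * f i z) = (\<lambda>z. c j * f j z) + (\<lambda>z. \<Sum>i\<in>A. c i * f i z)"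
    using insert.hyps by (simp add: fun_eq_iff)
  with insert show ?case
    by (simp add: linear_on_dual_add[OF \<xi>] linear_on_dual_cmult[OF \<xi>] linear_functional_cmult
        linear_functional_sum_fun)
qed

lemma dual_expansion:
  assumes "linear_on_dual \<xi>" and g: "linear_functional sV g"
  shows "\<xi> g = (\<Sum>i<m. g (v i) * \<xi> (vd i))"
proof -
  have "\<xi> g = \<xi> (\<lambda>z. \<Sum>i<m. g (v i) * vd i z)"
    by (rule arg_cong[where f = \<xi>], rule ext, rule linear_functional_expansion[OF g])
  also have "\<dots> = (\<Sum>i<m. g (v i) * \<xi> (vd i))"
    using linear_on_dual_sum[OF assms(1), of "{..<m}" vd] dual_linear by simp
  finally show ?thesis .
qed

lemma dual_basis_transpose:
  assumes "linear_on_dual \<xi>" and "linear_functional sV a" and h: "Vector_Spaces.linear sV sV h"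
  shows "(\<Sum>j<m. a (h (v j)) * \<xi> (vd j)) = (\<Sum>j<m. a (v j) * \<xi> (\<lambda>z. vd j (h z)))"
  using dual_expansion[OF assms(1) linear_functional_compose[OF assms(2) h]]
    dual_expansion[OF linear_on_dual_compose[OF assms(1) h] assms(2)]
  by simp

lemma dual_basis_transpose_sum:
  assumes "linear_on_dual \<xi>" and "linear_functional sV a" and "\<And>i. Vector_Spaces.linear sV sV (h i)"
  shows "(\<Sum>i<m. \<Sum>j<m. c i * a (h i (v j)) * \<xi> (vd j))
    = (\<Sum>i<m. \<Sum>j<m. c i * a (v j) * \<xi> (\<lambda>z. vd j (h i z)))"
  using dual_basis_transpose[OF assms(1,2,3)] by (simp add: mult.assoc flip: sum_distrib_left)

end

locale O_operator_bimodule =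
  fixes sA :: "'k::field \<Rightarrow> 'a::ab_group_add \<Rightarrow> 'a"
    and mult :: "'a \<Rightarrow> 'a \<Rightarrow> 'a"
    and sV :: "'k \<Rightarrow> 'v::ab_group_add \<Rightarrow> 'v"
    and l \<rho> :: "'a \<Rightarrow> 'v \<Rightarrow> 'v"
    and T :: "'v \<Rightarrow> 'a"
  assumes algebra: "assoc_algebra sA mult"
    and bimodule: "bimodule sA mult sV l \<rho>"
    and O_operator: "O_operator sA mult sV l \<rho> T"
begin

sublocale V: vector_space sV
  using bimodule by (simp add: bimodule_def)

abbreviation prec :: "'a \<times> ('v \<Rightarrow> 'k) \<Rightarrow> 'a \<times> ('v \<Rightarrow> 'k) \<Rightarrow> 'a \<times> ('v \<Rightarrow> 'k)" where
  "prec \<equiv> D_prec T l \<rho>"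
abbreviation succ :: "'a \<times> ('v \<Rightarrow> 'k) \<Rightarrow> 'a \<times> ('v \<Rightarrow> 'k) \<Rightarrow> 'a \<times> ('v \<Rightarrow> 'k)" where
  "succ \<equiv> D_succ T l \<rho>"
abbreviation D :: "('a \<times> ('v \<Rightarrow> 'k)) set" where
  "D \<equiv> D_carrier sV T"

lemma T_add: "T (u + w) = T u + T w" and T_scale: "T (sV c u) = sA c (T u)"
  using O_operator by (auto simp: O_operator_def Vector_Spaces.linear_iff)

lemma T_zero [simp]: "T 0 = 0"
  using T_add[of 0 0] by simp

lemma scale_A_zero [simp]: "sA c 0 = 0"
  using T_scale[of c 0] by simp

lemma T_diff: "T (u - w) = T u - T w"
  by (metis T_add diff_add_cancel eq_diff_eq)

lemma linear_l: "Vector_Spaces.linear sV sV (l x)" and linear_\<rho>: "Vector_Spaces.linear sV sV (\<rho> x)"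
  using bimodule by (auto simp: bimodule_def linear_to_gl_def)

lemma l_add_right: "l x (u + w) = l x u + l x w" and l_scale_right: "l x (sV c u) = sV c (l x u)"
  and \<rho>_add_right: "\<rho> x (u + w) = \<rho> x u + \<rho> x w" and \<rho>_scale_right: "\<rho> x (sV c u) = sV c (\<rho> x u)"
  using linear_l[of x] linear_\<rho>[of x] by (auto simp: Vector_Spaces.linear_iff)

lemma l_add_left: "l (x + y) u = l x u + l y u" and l_scale_left: "l (sA c x) u = sV c (l x u)"
  and \<rho>_add_left: "\<rho> (x + y) u = \<rho> x u + \<rho> y u" and \<rho>_scale_left: "\<rho> (sA c x) u = sV c (\<rho> x u)"
  using bimodule by (auto simp: bimodule_def linear_to_gl_def)

lemma l_zero [simp]: "l 0 u = 0" and \<rho>_zero [simp]: "\<rho> 0 u = 0"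
  and l_zero_right [simp]: "l x 0 = 0" and \<rho>_zero_right [simp]: "\<rho> x 0 = 0"
  using l_add_left[of 0 0 u] \<rho>_add_left[of 0 0 u] l_add_right[of x 0 0] \<rho>_add_right[of x 0 0]
  by simp_all

lemma l_mult: "l (mult x y) u = l x (l y u)" and \<rho>_mult: "\<rho> (mult x y) u = \<rho> y (\<rho> x u)"
  and l_\<rho>_commute: "l x (\<rho> y u) = \<rho> y (l x u)"
  using bimodule unfolding bimodule_def by (metis comp_apply)+

lemma mult_zero_left [simp]: "mult 0 x = 0" and mult_zero_right [simp]: "mult x 0 = 0"
  using algebra unfolding assoc_algebra_def by (metis add_cancel_right_right)+

lemma O_operator_mult: "mult (T u) (T w) = T (\<rho> (T w) u + l (T u) w)"
  using O_operator by (simp add: O_operator_def add.commute)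

lemma TV_succ_T: "TV_succ T l (T u) (T w) = T (l (T u) w)"
proof -
  let ?w = "SOME w'. T w' = T w"
  have "T (?w - w) = 0"
    using someI[of "\<lambda>w'. T w' = T w" w] by (simp add: T_diff)
  then have "T (l (T u) (?w - w)) = 0"
    using O_operator_mult[of u "?w - w"] by simp
  then show ?thesis
    by (simp add: TV_succ_def T_add l_add_right[of _ "?w - w" w, simplified])
qed

lemma TV_prec_T: "TV_prec T \<rho> (T u) (T w) = T (\<rho> (T w) u)"
proof -
  let ?u = "SOME u'. T u' = T u"
  have "T (?u - u) = 0"
    using someI[of "\<lambda>u'. T u' = T u" u] by (simp add: T_diff)
  then have "T (\<rho> (T w) (?u - u)) = 0"
    using O_operator_mult[of "?u - u" w] by simp
  then show ?thesis
    by (simp add: TV_prec_def T_add \<rho>_add_right[of _ "?u - u" u, simplified])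
qed

lemma D_prec_pair: "prec (T u, f) (T w, g) = (T (\<rho> (T w) u), \<lambda>z. f (l (T w) z))"
  by (simp add: D_prec_def TV_prec_T)

lemma D_succ_pair: "succ (T u, f) (T w, g) = (T (l (T u) w), \<lambda>z. g (\<rho> (T u) z))"
  by (simp add: D_succ_def TV_succ_T)

lemma D_prec_plus_succ_pair: "prec (T u, f) (T w, g) + succ (T u, f) (T w, g)
  = (T (\<rho> (T w) u + l (T u) w), \<lambda>z. f (l (T w) z) + g (\<rho> (T u) z))"
  by (simp add: D_prec_pair D_succ_pair T_add plus_fun_def)

lemma l_O_operator: "l (T (\<rho> (T w) u + l (T u) w)) z = l (T u) (l (T w) z)"
  and \<rho>_O_operator: "\<rho> (T (\<rho> (T w) u + l (T u) w)) z = \<rho> (T w) (\<rho> (T u) z)"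
  by (metis O_operator_mult l_mult \<rho>_mult)+

lemma l_T_add: "l (T (u + w)) z = l (T u) z + l (T w) z"
  and \<rho>_T_add: "\<rho> (T (u + w)) z = \<rho> (T u) z + \<rho> (T w) z"
  and l_T_scale: "l (T (sV c u)) z = sV c (l (T u) z)"
  and \<rho>_T_scale: "\<rho> (T (sV c u)) z = sV c (\<rho> (T u) z)"
  by (simp_all add: T_add T_scale l_add_left \<rho>_add_left l_scale_left \<rho>_scale_left)

lemma D_carrier_cases:
  assumes "p \<in> D"
  obtains u f where "p = (T u, f)" and "linear_functional sV f"
  using assms by (auto simp: D_carrier_def)

lemma pair_in_D_carrier [simp]: "(T u, f) \<in> D \<longleftrightarrow> linear_functional sV f"
  by (auto simp: D_carrier_def)

lemma D_scale_pair: "D_scale sA c (T u, f) = (T (sV c u), \<lambda>z. c * f z)"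
  by (simp add: D_scale_def T_scale)

lemma D_carrier_closed:
  shows "0 \<in> D"
    and "p \<in> D \<Longrightarrow> q \<in> D \<Longrightarrow> p + q \<in> D"
    and "p \<in> D \<Longrightarrow> D_scale sA c p \<in> D"
    and "p \<in> D \<Longrightarrow> q \<in> D \<Longrightarrow> prec p q \<in> D"
    and "p \<in> D \<Longrightarrow> q \<in> D \<Longrightarrow> succ p q \<in> D"
proof -
  show "0 \<in> D"
    using pair_in_D_carrier[of 0 0] by (simp add: zero_prod_def V.linear_functional_iff)
qed (auto elim!: D_carrier_cases simp: T_add[symmetric] D_scale_pair D_prec_pair D_succ_pair
    V.linear_functional_add V.linear_functional_cmult V.linear_functional_compose linear_l linear_\<rho>)

lemma D_prec_bilinear:
  assumes "p \<in> D" "q \<in> D" "r \<in> D"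
  shows "prec (p + q) r = prec p r + prec q r" and "prec p (q + r) = prec p q + prec p r"
    and "prec (D_scale sA c p) q = D_scale sA c (prec p q)"
    and "prec p (D_scale sA c q) = D_scale sA c (prec p q)"
  using assms
  by (auto elim!: D_carrier_cases simp: T_add[symmetric] T_scale[symmetric] D_scale_pair D_prec_pair
      fun_eq_iff V.linear_functional_iff l_T_add \<rho>_T_add l_T_scale \<rho>_T_scale
      \<rho>_add_right \<rho>_scale_right algebra_simps)

lemma D_succ_bilinear:
  assumes "p \<in> D" "q \<in> D" "r \<in> D"
  shows "succ (p + q) r = succ p r + succ q r" and "succ p (q + r) = succ p q + succ p r"
    and "succ (D_scale sA c p) q = D_scale sA c (succ p q)"
    and "succ p (D_scale sA c q) = D_scale sA c (succ p q)"
  using assms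
  by (auto elim!: D_carrier_cases simp: T_add[symmetric] T_scale[symmetric] D_scale_pair D_succ_pair
      fun_eq_iff V.linear_functional_iff l_T_add \<rho>_T_add l_T_scale \<rho>_T_scale
      l_add_right l_scale_right algebra_simps)

lemma D_prec_prec:
  assumes "p \<in> D" "q \<in> D" "r \<in> D"
  shows "prec (prec p q) r = prec p (prec q r + succ q r)"
  using assms
  by (auto elim!: D_carrier_cases simp only: D_prec_plus_succ_pair)
    (simp add: D_prec_pair l_O_operator \<rho>_O_operator)

lemma D_prec_succ:
  assumes "p \<in> D" "q \<in> D" "r \<in> D"
  shows "prec (succ p q) r = succ p (prec q r)"
  using assms by (auto elim!: D_carrier_cases simp: D_prec_pair D_succ_pair l_\<rho>_commute)

lemma D_succ_succ:
  assumes "p \<in> D" "q \<in> D" "r \<in> D"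
  shows "succ p (succ q r) = succ (prec p q + succ p q) r"
  using assms
  by (auto elim!: D_carrier_cases simp only: D_prec_plus_succ_pair)
    (simp add: D_succ_pair l_O_operator \<rho>_O_operator)

theorem D_dendriform: "dendriform_algebra (D_scale sA) D prec succ"
  unfolding dendriform_algebra_def
  by (simp add: D_carrier_closed D_prec_bilinear D_succ_bilinear D_prec_prec D_prec_succ D_succ_succ)

end

lemma sum_list_concat_pairs:
  "sum_list (map G (concat (map (\<lambda>i. [p i, q i]) [0..<n]))) = (\<Sum>i<n. G (p i) + G (q i))"
  by (induction n) auto

lemma sum_list_product_comprehension:
  "sum_list (map G (concat (map (\<lambda>(x, y). map (\<lambda>(x', y'). Q x y x' y') ys) xs)))
   = sum_list (map (\<lambda>(x, y). sum_list (map (\<lambda>(x', y'). G (Q x y x' y')) ys)) xs)"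
  by (induction xs) (auto simp: comp_def case_prod_beta)

lemma sum_list_flip2_symmetric:
  fixes F :: "'a \<Rightarrow> 'a \<Rightarrow> 'b::comm_monoid_add"
  shows "sum_list (map (\<lambda>(x, y). F x y) (flip2 (concat (map (\<lambda>i. [(a i, b i), (b i, a i)]) [0..<n]))))
   = sum_list (map (\<lambda>(x, y). F x y) (concat (map (\<lambda>i. [(a i, b i), (b i, a i)]) [0..<n])))"
  unfolding flip2_def map_map sum_list_concat_pairs by (simp add: add.commute)

locale O_operator_dual_basis =
  O_operator_bimodule sA mult sV l \<rho> T + dual_basis sV m v vd
  for sA :: "'k::field \<Rightarrow> 'a::ab_group_add \<Rightarrow> 'a"
    and mult :: "'a \<Rightarrow> 'a \<Rightarrow> 'a"
    and sV :: "'k \<Rightarrow> 'v::ab_group_add \<Rightarrow> 'v"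
    and l \<rho> :: "'a \<Rightarrow> 'v \<Rightarrow> 'v"
    and T :: "'v \<Rightarrow> 'a"
    and m :: nat
    and v :: "nat \<Rightarrow> 'v"
    and vd :: "nat \<Rightarrow> 'v \<Rightarrow> 'k"
begin

text \<open>\<open>r = T + \<sigma>(T)\<close> for \<open>T = \<Sum>\<^sub>i T(v\<^sub>i) \<otimes> v\<^sub>i\<^sup>*\<close>.\<close>
definition symmetrized_T :: "(('a \<times> ('v \<Rightarrow> 'k)) \<times> ('a \<times> ('v \<Rightarrow> 'k))) list" where
  "symmetrized_T = concat (map (\<lambda>i. [((T (v i), 0), (0, vd i)), ((0, vd i), (T (v i), 0))]) [0..<m])"

lemma symmetrized_T_symmetric: "tensor2_eq (D_scale sA) D (flip2 symmetrized_T) symmetrized_T"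
  unfolding tensor2_eq_def symmetrized_T_def by (simp only: sum_list_flip2_symmetric) simp

lemma D_products_on_basis:
  shows "prec (T u, 0) (T w, 0) = (T (\<rho> (T w) u), 0)"
    and "succ (T u, 0) (T w, 0) = (T (l (T u) w), 0)"
    and "prec (T u, 0) (0, g) = 0"
    and "succ (T u, 0) (0, g) = (0, \<lambda>z. g (\<rho> (T u) z))"
    and "prec (0, f) (T w, 0) = (0, \<lambda>z. f (l (T w) z))"
    and "succ (0, f) (T w, 0) = 0"
    and "linear_functional sV f \<Longrightarrow> prec (0, f) (0, g) = 0"
    and "linear_functional sV g \<Longrightarrow> succ (0, f) (0, g) = 0"
  using D_prec_pair[of u 0 w 0] D_succ_pair[of u 0 w 0] D_prec_pair[of u 0 0 g] D_succ_pair[of u 0 0 g]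
    D_prec_pair[of 0 f w 0] D_succ_pair[of 0 f w 0] D_prec_pair[of 0 f 0 g] D_succ_pair[of 0 f 0 g]
  by (auto simp: zero_fun_def zero_prod_def V.linear_functional_iff dest: spec[of _ 0])

lemma lin_functional_on_D_restrictions:
  assumes "lin_functional_on (D_scale sA) D \<phi>"
  shows "\<phi> 0 = 0"
    and "p \<in> D \<Longrightarrow> q \<in> D \<Longrightarrow> \<phi> (p + q) = \<phi> p + \<phi> q"
    and "linear_functional sV (\<lambda>u. \<phi> (T u, 0))"
    and "linear_on_dual (\<lambda>g. \<phi> (0, g))"
proof -
  have add: "\<phi> (p + q) = \<phi> p + \<phi> q" if "p \<in> D" "q \<in> D" for p q
    using assms that by (simp add: lin_functional_on_def)
  have scale: "\<phi> (D_scale sA c p) = c * \<phi> p" if "p \<in> D" for c p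
    using assms that by (simp add: lin_functional_on_def)
  have zero_pair: "(0, f) \<in> D \<longleftrightarrow> linear_functional sV f" for f
    using pair_in_D_carrier[of 0 f] by simp
  have zero_functional: "linear_functional sV 0"
    by (simp add: V.linear_functional_iff)
  show "\<phi> 0 = 0"
    using scale[of 0 0] D_carrier_closed(1) by (simp add: D_scale_def zero_prod_def zero_fun_def)
  show "p \<in> D \<Longrightarrow> q \<in> D \<Longrightarrow> \<phi> (p + q) = \<phi> p + \<phi> q" by (rule add)
  show "linear_functional sV (\<lambda>u. \<phi> (T u, 0))"
  proof (unfold V.linear_functional_iff, intro conjI allI)
    fix u w c
    have "(T u, 0) + (T w, 0) = (T (u + w), 0 :: 'v \<Rightarrow> 'k)" by (simp add: T_add)
    then show "\<phi> (T (u + w), 0) = \<phi> (T u, 0) + \<phi> (T w, 0)"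
      using add[of "(T u, 0)" "(T w, 0)"] zero_functional by simp
    have "D_scale sA c (T u, 0) = (T (sV c u), 0 :: 'v \<Rightarrow> 'k)" by (simp add: D_scale_pair zero_fun_def)
    then show "\<phi> (T (sV c u), 0) = c * \<phi> (T u, 0)"
      using scale[of "(T u, 0)" c] zero_functional by simp
  qed
  show "linear_on_dual (\<lambda>g. \<phi> (0, g))"
    using add[of "(0, _)" "(0, _)"] scale[of "(0, _)"]
    by (simp add: linear_on_dual_def zero_pair V.linear_functional_add V.linear_functional_cmult D_scale_def)
qed

lemma D_equation_symmetrized_T: "D_equation (D_scale sA) D prec succ symmetrized_T"
  unfolding D_equation_def tensor3_eq_def
proof (intro allI impI)
  fix \<phi>1 \<phi>2 \<phi>3
  assume \<phi>: "lin_functional_on (D_scale sA) D \<phi>1" "lin_functional_on (D_scale sA) D \<phi>2"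
    "lin_functional_on (D_scale sA) D \<phi>3"
  have \<psi>_add: "\<phi> (T (u + w), 0) = \<phi> (T u, 0) + \<phi> (T w, 0)"
    if "lin_functional_on (D_scale sA) D \<phi>" for \<phi> u w
    using lin_functional_on_D_restrictions(3)[OF that] by (simp add: V.linear_functional_iff)
  note \<psi> = \<phi>[THEN lin_functional_on_D_restrictions(3)] and \<xi> = \<phi>[THEN lin_functional_on_D_restrictions(4)]
  have l_part: "(\<Sum>i<m. \<Sum>j<m. \<phi>1 (T (l (T (v i)) (v j)), 0) * \<phi>2 (0, vd i) * \<phi>3 (0, vd j))
     = (\<Sum>i<m. \<Sum>j<m. \<phi>1 (T (v i), 0) * \<phi>2 (0, vd j) * \<phi>3 (0, \<lambda>z. vd i (l (T (v j)) z)))"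
    using dual_basis_transpose_sum[where c="\<lambda>i. \<phi>2 (0, vd i)" and h="\<lambda>i. l (T (v i))",
        OF \<xi>(3) \<psi>(1) linear_l]
    by (subst (2) sum.swap) (simp add: ac_simps)
  have \<rho>_part: "(\<Sum>i<m. \<Sum>j<m. \<phi>1 (T (\<rho> (T (v j)) (v i)), 0) * \<phi>2 (0, vd i) * \<phi>3 (0, vd j))
     = (\<Sum>i<m. \<Sum>j<m. \<phi>1 (T (v j), 0) * \<phi>2 (0, \<lambda>z. vd j (\<rho> (T (v i)) z)) * \<phi>3 (0, vd i))"
    using dual_basis_transpose_sum[where c="\<lambda>i. \<phi>3 (0, vd i)" and h="\<lambda>i. \<rho> (T (v i))",
        OF \<xi>(2) \<psi>(1) linear_\<rho>]
    by (subst (1) sum.swap) (simp add: ac_simps)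
  have \<rho>_dual_part: "(\<Sum>i<m. \<Sum>j<m. \<phi>1 (0, \<lambda>z. vd j (\<rho> (T (v i)) z)) * \<phi>2 (0, vd i) * \<phi>3 (T (v j), 0))
     = (\<Sum>i<m. \<Sum>j<m. \<phi>1 (0, vd i) * \<phi>2 (0, vd j) * \<phi>3 (T (\<rho> (T (v j)) (v i)), 0))"
    using dual_basis_transpose_sum[where c="\<lambda>i. \<phi>2 (0, vd i)" and h="\<lambda>i. \<rho> (T (v i))",
        OF \<xi>(1) \<psi>(3) linear_\<rho>]
    by (subst (2) sum.swap) (simp add: ac_simps)
  have l_dual_part: "(\<Sum>i<m. \<Sum>j<m. \<phi>1 (0, \<lambda>z. vd i (l (T (v j)) z)) * \<phi>2 (T (v i), 0) * \<phi>3 (0, vd j))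
     = (\<Sum>i<m. \<Sum>j<m. \<phi>1 (0, vd j) * \<phi>2 (T (l (T (v i)) (v j)), 0) * \<phi>3 (0, vd i))"
    using dual_basis_transpose_sum[where c="\<lambda>i. \<phi>3 (0, vd i)" and h="\<lambda>i. l (T (v i))",
        OF \<xi>(1) \<psi>(2) linear_l]
    by (subst (1) sum.swap) (simp add: ac_simps)
  show "(\<Sum>(x, y, z)\<leftarrow>r12_r13 (\<lambda>x y. prec x y + succ x y) symmetrized_T. \<phi>1 x * \<phi>2 y * \<phi>3 z) =
       (\<Sum>(x, y, z)\<leftarrow>r13_r23 prec symmetrized_T @ r23_r12 succ symmetrized_T. \<phi>1 x * \<phi>2 y * \<phi>3 z)"
    unfolding r12_r13_def r13_r23_def r23_r12_def symmetrized_T_def map_append sum_list_append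
    by (simp only: sum_list_product_comprehension sum_list_concat_pairs)
      (simp add: D_products_on_basis T_add[symmetric] \<psi>_add \<phi> \<phi>[THEN lin_functional_on_D_restrictions(1)] dual_linear
        sum.distrib distrib_right l_part \<rho>_part \<rho>_dual_part l_dual_part add_ac)
qed

end

theorem theorem4p4p13:
  fixes sA :: "'k::field \<Rightarrow> 'a::ab_group_add \<Rightarrow> 'a"
    and mult :: "'a \<Rightarrow> 'a \<Rightarrow> 'a"
    and sV :: "'k \<Rightarrow> 'v::ab_group_add \<Rightarrow> 'v"
    and l \<rho> :: "'a \<Rightarrow> 'v \<Rightarrow> 'v"
    and T :: "'v \<Rightarrow> 'a"
    and m :: nat
    and v :: "nat \<Rightarrow> 'v"
    and vd :: "nat \<Rightarrow> 'v \<Rightarrow> 'k"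
  assumes fdA: "fd_vector_space sA"
    and fdV: "fd_vector_space sV"
    and alg: "assoc_algebra sA mult"
    and bimod: "bimodule sA mult sV l \<rho>"
    and Oop: "O_operator sA mult sV l \<rho> T"
    and basis_inj: "inj_on v {..<m}"
    and basis_indep: "\<not> module.dependent sV (v ` {..<m})"
    and basis_span: "module.span sV (v ` {..<m}) = UNIV"
    and dual_lin: "\<And>i. i < m \<Longrightarrow> Vector_Spaces.linear sV ((*)) (vd i)"
    and dual_basis: "\<And>i j. i < m \<Longrightarrow> j < m \<Longrightarrow> vd i (v j) = (if i = j then 1 else 0)"
  shows "dendriform_algebra (D_scale sA) (D_carrier sV T) (D_prec T l \<rho>) (D_succ T l \<rho>)
    \<and> (let r = concat (map (\<lambda>i. [((T (v i), 0), (0, vd i)), ((0, vd i), (T (v i), 0))]) [0..<m])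
       in tensor2_eq (D_scale sA) (D_carrier sV T) (flip2 r) r
          \<and> D_equation (D_scale sA) (D_carrier sV T) (D_prec T l \<rho>) (D_succ T l \<rho>) r)"
proof -
  have "vector_space sV"
    using bimod by (simp add: bimodule_def)
  then interpret O_operator_dual_basis sA mult sV l \<rho> T m v vd
    using alg bimod Oop basis_inj basis_span dual_lin dual_basis
    by (intro O_operator_dual_basis.intro O_operator_bimodule.intro dual_basis.intro
        dual_basis_axioms.intro)
  show ?thesis
    using D_dendriform symmetrized_T_symmetric D_equation_symmetrized_T
    unfolding symmetrized_T_def Let_def by blast
qed

end
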